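(* The linear span of $\{h_k:k\geq2\}$ is dense in $H^2$ with respect to the compact-open topology: for every $f\in H^2$ there is a sequence $(p_j)$ in $\mathrm{span}\{h_k:k\ge2\}$ converging to $f$ uniformly on compact subsets of $\mathbb{D}$.
   Context: $\mathbb{D}$ is the open unit disk and $H^2$ the Hardy space on $\mathbb{D}$. For $k\geq 2$, $h_k(z)=\frac{1}{1-z}\big(\mathrm{Log}(1-z^k)-\mathrm{Log}(1-z)-\ln k\big)$ with $\mathrm{Log}$ the principal branch. *)

theory Defs
  imports "HOL-Complex_Analysis.Complex_Analysis"
begin

definition hardy2 :: "(complex \<Rightarrow> complex) set" where
  "hardy2 = {f. f holomorphic_on ball 0 1 \<and>
     (\<exists>B. \<forall>r. 0 < r \<and> r < 1 \<longrightarrow>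
        integral {0..2*pi} (\<lambda>t. (cmod (f (complex_of_real r * exp (\<i> * complex_of_real t))))\<^sup>2) \<le> B)}"

definition hk :: "nat \<Rightarrow> complex \<Rightarrow> complex" where
  "hk k z = (Ln (1 - z ^ k) - Ln (1 - z) - complex_of_real (ln (real k))) / (1 - z)"

definition span_hk :: "(complex \<Rightarrow> complex) set" where
  "span_hk = {p. \<exists>S c. finite S \<and> S \<subseteq> {2..} \<and>
                  p = (\<lambda>z. \<Sum>k\<in>S. c k * hk k z)}"

end

theory Submission
  imports Defs "HOL-Real_Asymp.Real_Asymp"
begin

(*
  The closure of span_hk under uniform convergence on the discs cball 0 r, r < 1, is a closed
  subspace. Since h_2k - h_k = (-ln 2 + Ln (1 - z^2k) - Ln (1 - z^k)) / (1 - z), letting k grow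
  puts 1/(1 - z) in it, hence every h_k + ln k/(1 - z) = (Ln (1 - z^k) - Ln (1 - z))/(1 - z);
  as Ln (1 - z^m)/(1 - z) tends to 0 with m, also every Ln (1 - z^k)/(1 - z).
  Expanding -Ln (1 - z^j) = sum of z^(jn)/n expresses z^j/(1 - z) through the z^(jn)/(1 - z),
  n >= 2, which are much smaller on cball 0 r; iterating this shows that z^j/(1 - z) lies in the
  closure for every j. A holomorphic f is phi/(1 - z) with phi a power series, so it is a locally
  uniform limit of combinations of the z^j/(1 - z).
*)

lemma ex_power_less_beyond:
  fixes r c :: real
  assumes "0 \<le> r" "r < 1" "c > 0"
  obtains k where "k \<ge> k0" "r ^ k < c"
proof -
  have "(\<lambda>n. r ^ n) \<longlonglongrightarrow> 0" using assms by (intro LIMSEQ_realpow_zero) auto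
  then have "eventually (\<lambda>n. r ^ n < c) sequentially" using assms(3) by (rule order_tendstoD(2))
  then obtain N where "\<forall>n\<ge>N. r ^ n < c" by (auto simp: eventually_sequentially)
  then show ?thesis using that[of "max N k0"] by auto
qed

lemma power_times_power_two_power_tendsto_0:
  fixes M r :: real
  assumes M: "M > 0" and r: "0 \<le> r" "r < 1"
  shows "(\<lambda>t. M ^ (t + 1) * r ^ (2 ^ t)) \<longlonglongrightarrow> 0"
proof -
  obtain N where N: "r ^ N < 1 / (2 * M)"
    using ex_power_less_beyond[of r "1 / (2 * M)"] r M by auto
  have "summable (\<lambda>t. M ^ (t + 1) * r ^ (2 ^ t))"
  proof (rule summable_ratio_test[of "1/2" N])
    fix n assume n: "n \<ge> N"
    have "r ^ (2 ^ n) \<le> r ^ n" using r less_exp[of n] by (intro power_decreasing) auto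
    also have "\<dots> \<le> r ^ N" using r n by (intro power_decreasing) auto
    finally have small: "M * r ^ (2 ^ n) \<le> 1/2"
      using N M mult_left_mono[of "r ^ (2 ^ n)" "1 / (2 * M)" M] by simp
    have "M ^ (Suc n + 1) * r ^ (2 ^ Suc n) = (M * r ^ (2 ^ n)) * (M ^ (n + 1) * r ^ (2 ^ n))"
      by (simp add: power_mult[symmetric] mult_ac power2_eq_square[symmetric])
    also have "\<dots> \<le> 1/2 * (M ^ (n + 1) * r ^ (2 ^ n))"
      using small M r by (intro mult_right_mono) auto
    finally show "norm (M ^ (Suc n + 1) * r ^ (2 ^ Suc n)) \<le> 1/2 * norm (M ^ (n + 1) * r ^ (2 ^ n))"
      using M r by simp
  qed simp
  then show ?thesis by (rule summable_LIMSEQ_zero)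
qed

lemma sum_power_div_of_nat_le:
  fixes q :: real
  assumes "0 \<le> q" "q < 1"
  shows "(\<Sum>n=2..N. q ^ n / real n) \<le> q\<^sup>2 / (1 - q)"
proof (cases "N < 2")
  case False
  have "(\<Sum>n=2..N. q ^ n / real n) \<le> (\<Sum>n=2..N. q ^ n)"
    using assms by (intro sum_mono) (auto simp: divide_le_eq mult_le_cancel_left1)
  also have "\<dots> = (q\<^sup>2 - q ^ Suc N) / (1 - q)"
    using assms False by (subst sum_gp) auto
  also have "\<dots> \<le> q\<^sup>2 / (1 - q)" using assms by (intro divide_right_mono) auto
  finally show ?thesis .
qed (use assms in simp)

lemma norm_Ln_one_minus_power_le:
  fixes z :: complex
  assumes "norm z \<le> r" "r ^ k < 1/2"
  shows "norm (Ln (1 - z ^ k)) \<le> 2 * r ^ k"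
proof -
  have zk: "norm (- (z ^ k)) \<le> r ^ k" using assms(1) by (simp add: norm_power power_mono)
  then have "norm (Ln (1 + - (z ^ k))) \<le> 2 * norm (- (z ^ k))"
    using assms(2) by (intro norm_Ln_le) linarith
  then show ?thesis using zk by simp
qed

lemma norm_divide_one_minus_le:
  fixes z :: complex
  assumes "norm z \<le> r" "r < 1"
  shows "norm (a / (1 - z)) \<le> norm a / (1 - r)"
proof -
  have "1 - r \<le> norm (1 - z)" using assms(1) norm_triangle_ineq2[of 1 z] by simp
  then show ?thesis using assms(2) by (simp add: norm_divide frac_le)
qed

lemma norm_Ln_one_minus_plus_partial_sum_le:
  fixes w :: complex
  assumes "norm w < 1"
  shows "norm (Ln (1 - w) + (\<Sum>k=1..n. w ^ k / of_nat k)) \<le> norm w ^ Suc n / (1 - norm w)"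
proof -
  have "(\<lambda>k. w ^ k / of_nat k) sums - Ln (1 - w)"
    using sums_minus[OF Ln_series[of "-w"]] assms by (simp add: power_minus')
  then have "(\<lambda>k. w ^ (k + Suc n) / of_nat (k + Suc n)) sums
               (- Ln (1 - w) - (\<Sum>k<Suc n. w ^ k / of_nat k))"
    by (intro sums_split_initial_segment)
  also have "(\<Sum>k<Suc n. w ^ k / of_nat k) = (\<Sum>k=1..n. w ^ k / of_nat k)"
    by (intro sum.mono_neutral_right) auto
  finally have tail: "(\<lambda>k. w ^ (k + Suc n) / of_nat (k + Suc n)) sums
                        - (Ln (1 - w) + (\<Sum>k=1..n. w ^ k / of_nat k))"
    by (simp add: algebra_simps)
  have bound: "norm (w ^ (k + Suc n) / of_nat (k + Suc n)) \<le> norm w ^ Suc n * norm w ^ k" for k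
  proof -
    have "norm (w ^ (k + Suc n) / of_nat (k + Suc n)) = norm w ^ (k + Suc n) / real (k + Suc n)"
      by (simp only: norm_divide norm_power norm_of_nat)
    also have "\<dots> \<le> norm w ^ (k + Suc n)"
      using divide_left_mono[of 1 "real (k + Suc n)" "norm w ^ (k + Suc n)"] by simp
    finally show ?thesis by (simp add: power_add mult_ac)
  qed
  have geom: "(\<lambda>k. norm w ^ Suc n * norm w ^ k) sums (norm w ^ Suc n * (1 / (1 - norm w)))"
    using assms by (intro sums_mult geometric_sums) auto
  have "norm (- (Ln (1 - w) + (\<Sum>k=1..n. w ^ k / of_nat k))) \<le> norm w ^ Suc n * (1 / (1 - norm w))"
    by (rule norm_sums_le[OF tail geom bound])
  then show ?thesis by (simp only: norm_minus_cancel) simp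
qed

lemma compact_subset_ball_imp_subset_cball:
  fixes K :: "'a::metric_space set"
  assumes "compact K" "K \<subseteq> ball a r"
  obtains R where "R < r" "K \<subseteq> cball a R"
proof (cases "K = {}")
  case True
  then show ?thesis using that[of "r - 1"] by simp
next
  case False
  have "continuous_on K (dist a)" by (intro continuous_intros)
  then obtain x where x: "x \<in> K" "\<And>y. y \<in> K \<Longrightarrow> dist a y \<le> dist a x"
    using continuous_attains_sup[OF assms(1) False] by blast
  show ?thesis
  proof (rule that)
    show "dist a x < r" using x(1) assms(2) by auto
    show "K \<subseteq> cball a (dist a x)" using x(2) by auto
  qed
qed

lemma uniform_limit_on_compacts_of_approx_on_cballs:
  fixes f :: "'a::real_normed_vector \<Rightarrow> 'b::metric_space"
  assumes approx: "\<And>r \<epsilon>. 0 < r \<Longrightarrow> r < 1 \<Longrightarrow> \<epsilon> > 0 \<Longrightarrow> \<exists>p\<in>S. \<forall>z\<in>cball 0 r. dist (p z) (f z) \<le> \<epsilon>"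
  shows "\<exists>p. (\<forall>j. p j \<in> S) \<and>
           (\<forall>K. compact K \<and> K \<subseteq> ball 0 1 \<longrightarrow> uniform_limit K p f sequentially)"
proof -
  define r :: "nat \<Rightarrow> real" where "r j = 1 - 1 / (real j + 2)" for j
  define \<epsilon> :: "nat \<Rightarrow> real" where "\<epsilon> j = 1 / (real j + 1)" for j
  have "\<exists>p\<in>S. \<forall>z\<in>cball 0 (r j). dist (p z) (f z) \<le> \<epsilon> j" for j
    by (intro approx) (auto simp: r_def \<epsilon>_def field_simps)
  then obtain P where P: "\<And>j. P j \<in> S" "\<And>j z. z \<in> cball 0 (r j) \<Longrightarrow> dist (P j z) (f z) \<le> \<epsilon> j"
    by metis
  have "uniform_limit K P f sequentially" if K: "compact K" "K \<subseteq> ball 0 1" for K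
  proof (rule uniform_limitI)
    fix e :: real assume "e > 0"
    obtain R where R: "R < 1" "K \<subseteq> cball 0 R"
      using compact_subset_ball_imp_subset_cball[OF K] .
    have "r \<longlonglongrightarrow> 1" "\<epsilon> \<longlonglongrightarrow> 0" unfolding r_def \<epsilon>_def by real_asymp+
    then have "eventually (\<lambda>j. R < r j \<and> \<epsilon> j < e) sequentially"
      using R(1) \<open>e > 0\<close> by (intro eventually_conj order_tendstoD)
    then show "\<forall>\<^sub>F j in sequentially. \<forall>z\<in>K. dist (P j z) (f z) < e"
    proof (rule eventually_mono)
      fix j assume j: "R < r j \<and> \<epsilon> j < e"
      show "\<forall>z\<in>K. dist (P j z) (f z) < e"
      proof
        fix z assume "z \<in> K"
        then have "z \<in> cball 0 (r j)" using R(2) j by auto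
        then show "dist (P j z) (f z) < e" using P(2) j by (meson le_less_trans)
      qed
    qed
  qed
  then show ?thesis using P(1) by blast
qed

lemma span_hk_0: "(\<lambda>z. 0) \<in> span_hk"
  unfolding span_hk_def by (intro CollectI exI[of _ "{}"]) simp

lemma span_hk_hk: "k \<ge> 2 \<Longrightarrow> (\<lambda>z. a * hk k z) \<in> span_hk"
  unfolding span_hk_def by (intro CollectI exI[of _ "{k}"] exI[of _ "\<lambda>_. a"]) simp

lemma span_hk_add:
  assumes "p \<in> span_hk" "q \<in> span_hk"
  shows "(\<lambda>z. p z + q z) \<in> span_hk"
proof -
  obtain S c where S: "finite S" "S \<subseteq> {2..}" "p = (\<lambda>z. \<Sum>k\<in>S. c k * hk k z)"
    using assms(1) unfolding span_hk_def by blast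
  obtain T d where T: "finite T" "T \<subseteq> {2..}" "q = (\<lambda>z. \<Sum>k\<in>T. d k * hk k z)"
    using assms(2) unfolding span_hk_def by blast
  define e where "e k = (if k \<in> S then c k else 0) + (if k \<in> T then d k else 0)" for k
  have restrict: "(\<Sum>k\<in>S \<union> T. if k \<in> A then f k else 0) = sum f A"
    if "A \<subseteq> S \<union> T" for A and f :: "nat \<Rightarrow> complex"
    using S(1) T(1) that by (subst sum.inter_restrict[symmetric]) (auto simp: Int_absorb1)
  have "p z + q z = (\<Sum>k\<in>S \<union> T. e k * hk k z)" for z
    unfolding S(3) T(3) e_def distrib_right sum.distrib
    by (subst (1 2) restrict[symmetric]) (auto intro!: arg_cong2[where f = "(+)"] sum.cong)
  then show ?thesis
    unfolding span_hk_def using S T by (intro CollectI exI[of _ "S \<union> T"] exI[of _ e]) auto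
qed

lemma span_hk_scale:
  assumes "p \<in> span_hk"
  shows "(\<lambda>z. a * p z) \<in> span_hk"
proof -
  obtain S c where S: "finite S" "S \<subseteq> {2..}" "p = (\<lambda>z. \<Sum>k\<in>S. c k * hk k z)"
    using assms unfolding span_hk_def by blast
  then show ?thesis unfolding span_hk_def
    by (intro CollectI exI[of _ S] exI[of _ "\<lambda>k. a * c k"]) (simp add: sum_distrib_left mult.assoc)
qed

(* The sup-distance on cball 0 r from g to span_hk is at most e; the slack \<epsilon> is needed since the
   infimum need not be attained. *)
definition span_hk_dist_le :: "real \<Rightarrow> (complex \<Rightarrow> complex) \<Rightarrow> real \<Rightarrow> bool" where
  "span_hk_dist_le r g e \<longleftrightarrow>
     (\<forall>\<epsilon>>0. \<exists>p\<in>span_hk. \<forall>z\<in>cball 0 r. norm (p z - g z) \<le> e + \<epsilon>)"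

lemma span_hk_dist_leD:
  "span_hk_dist_le r g e \<Longrightarrow> \<epsilon> > 0 \<Longrightarrow> \<exists>p\<in>span_hk. \<forall>z\<in>cball 0 r. norm (p z - g z) \<le> e + \<epsilon>"
  unfolding span_hk_dist_le_def by blast

lemma span_hk_dist_le_eps:
  assumes "\<And>d. d > 0 \<Longrightarrow> span_hk_dist_le r g (e + d)"
  shows "span_hk_dist_le r g e"
  unfolding span_hk_dist_le_def
proof (intro allI impI)
  fix \<epsilon> :: real assume "\<epsilon> > 0"
  then have "\<epsilon>/2 > 0" by simp
  from span_hk_dist_leD[OF assms[OF this] this]
  show "\<exists>p\<in>span_hk. \<forall>z\<in>cball 0 r. norm (p z - g z) \<le> e + \<epsilon>"
    by (simp only: add.assoc field_sum_of_halves)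
qed

lemma span_hk_dist_le_mono:
  "span_hk_dist_le r g e \<Longrightarrow> e \<le> e' \<Longrightarrow> span_hk_dist_le r g e'"
  unfolding span_hk_dist_le_def by (meson add_right_mono order_trans)

lemma span_hk_dist_le_bound:
  assumes "\<And>z. z \<in> cball 0 r \<Longrightarrow> norm (g z) \<le> e"
  shows "span_hk_dist_le r g e"
  unfolding span_hk_dist_le_def
proof (intro allI impI bexI[OF _ span_hk_0] ballI)
  fix \<epsilon> :: real and z :: complex
  assume "\<epsilon> > 0" "z \<in> cball 0 r"
  then show "norm (0 - g z) \<le> e + \<epsilon>" using assms[of z] by simp
qed

lemma span_hk_dist_le_0_of_span: "p \<in> span_hk \<Longrightarrow> span_hk_dist_le r p 0"
  unfolding span_hk_dist_le_def by (auto intro!: bexI[of _ p])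

lemma span_hk_dist_le_add:
  assumes "span_hk_dist_le r g e1" "span_hk_dist_le r h e2"
  shows "span_hk_dist_le r (\<lambda>z. g z + h z) (e1 + e2)"
  unfolding span_hk_dist_le_def
proof (intro allI impI)
  fix \<epsilon> :: real assume "\<epsilon> > 0"
  then have "\<epsilon>/2 > 0" by simp
  obtain p where p: "p \<in> span_hk" "\<forall>z\<in>cball 0 r. norm (p z - g z) \<le> e1 + \<epsilon>/2"
    using span_hk_dist_leD[OF assms(1) \<open>\<epsilon>/2 > 0\<close>] ..
  obtain q where q: "q \<in> span_hk" "\<forall>z\<in>cball 0 r. norm (q z - h z) \<le> e2 + \<epsilon>/2"
    using span_hk_dist_leD[OF assms(2) \<open>\<epsilon>/2 > 0\<close>] ..
  have "norm ((p z + q z) - (g z + h z)) \<le> e1 + e2 + \<epsilon>" if "z \<in> cball 0 r" for z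
  proof -
    have "norm ((p z + q z) - (g z + h z)) \<le> norm (p z - g z) + norm (q z - h z)"
      by (metis add_diff_add norm_triangle_ineq)
    then show ?thesis using p(2) q(2) that by fastforce
  qed
  then show "\<exists>s\<in>span_hk. \<forall>z\<in>cball 0 r. norm (s z - (g z + h z)) \<le> e1 + e2 + \<epsilon>"
    by (intro bexI[OF _ span_hk_add[OF p(1) q(1)]]) simp
qed

lemma span_hk_dist_le_scale:
  assumes "span_hk_dist_le r g e"
  shows "span_hk_dist_le r (\<lambda>z. a * g z) (norm a * e)"
  unfolding span_hk_dist_le_def
proof (intro allI impI)
  fix \<epsilon> :: real assume "\<epsilon> > 0"
  define \<delta> where "\<delta> = \<epsilon> / (norm a + 1)"
  have "\<delta> > 0" using \<open>\<epsilon> > 0\<close> by (simp add: \<delta>_def add_nonneg_pos)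
  have "norm a * \<delta> \<le> \<epsilon>"
    using \<open>\<epsilon> > 0\<close> by (simp add: \<delta>_def divide_le_eq add_nonneg_pos mult.commute)
  obtain p where p: "p \<in> span_hk" "\<forall>z\<in>cball 0 r. norm (p z - g z) \<le> e + \<delta>"
    using span_hk_dist_leD[OF assms \<open>\<delta> > 0\<close>] ..
  have "norm (a * p z - a * g z) \<le> norm a * e + \<epsilon>" if "z \<in> cball 0 r" for z
  proof -
    have "norm (a * p z - a * g z) = norm a * norm (p z - g z)"
      by (simp add: norm_mult right_diff_distrib[symmetric])
    also have "\<dots> \<le> norm a * (e + \<delta>)" using p(2)[rule_format, OF that] by (simp add: mult_left_mono)
    finally show ?thesis using \<open>norm a * \<delta> \<le> \<epsilon>\<close> by (simp add: distrib_left)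
  qed
  then show "\<exists>s\<in>span_hk. \<forall>z\<in>cball 0 r. norm (s z - a * g z) \<le> norm a * e + \<epsilon>"
    by (intro bexI[OF _ span_hk_scale[OF p(1), of a]]) simp
qed

lemma span_hk_dist_le_perturb:
  assumes "span_hk_dist_le r g e" "\<And>z. z \<in> cball 0 r \<Longrightarrow> norm (g z - h z) \<le> d"
  shows "span_hk_dist_le r h (e + d)"
proof -
  have "span_hk_dist_le r (\<lambda>z. h z - g z) d"
    using assms(2) by (intro span_hk_dist_le_bound) (simp add: norm_minus_commute)
  from span_hk_dist_le_add[OF assms(1) this] show ?thesis by simp
qed

lemma span_hk_dist_le_sum:
  assumes "finite I" "\<And>i. i \<in> I \<Longrightarrow> span_hk_dist_le r (g i) (e i)"
  shows "span_hk_dist_le r (\<lambda>z. \<Sum>i\<in>I. g i z) (\<Sum>i\<in>I. e i)"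
  using assms
proof (induction I rule: finite_induct)
  case empty
  then show ?case by (simp add: span_hk_dist_le_bound)
next
  case (insert x F)
  then show ?case using span_hk_dist_le_add[of r "g x" "e x" "\<lambda>z. \<Sum>i\<in>F. g i z"] by simp
qed

definition ln_term :: "nat \<Rightarrow> complex \<Rightarrow> complex" where
  "ln_term k z = Ln (1 - z ^ k) / (1 - z)"

definition power_term :: "nat \<Rightarrow> complex \<Rightarrow> complex" where
  "power_term j z = z ^ j / (1 - z)"

lemma hk_eq_ln_term:
  "hk k z = ln_term k z - ln_term 1 z - of_real (ln (real k)) * (1 / (1 - z))"
  unfolding hk_def ln_term_def by (simp add: diff_divide_distrib)

lemma norm_ln_term_le:
  assumes "norm z \<le> r" "r < 1" "r ^ k < 1/2"
  shows "norm (ln_term k z) \<le> 2 * r ^ k / (1 - r)"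
proof -
  have "norm (ln_term k z) \<le> norm (Ln (1 - z ^ k)) / (1 - r)"
    unfolding ln_term_def using assms by (intro norm_divide_one_minus_le)
  also have "\<dots> \<le> 2 * r ^ k / (1 - r)"
    using norm_Ln_one_minus_power_le[OF assms(1,3)] assms(2) by (intro divide_right_mono) auto
  finally show ?thesis .
qed

lemma span_hk_dist_le_inverse_one_minus:
  assumes r: "0 < r" "r < 1"
  shows "span_hk_dist_le r (\<lambda>z. 1 / (1 - z)) 0"
proof -
  have "span_hk_dist_le r (\<lambda>z. - of_real (ln 2) * (1 / (1 - z))) 0"
  proof (rule span_hk_dist_le_eps)
    fix d :: real assume "d > 0"
    obtain k where k: "k \<ge> 2" "r ^ k < min (1/2) (d * (1 - r) / 4)"
      using ex_power_less_beyond[of r "min (1/2) (d * (1 - r) / 4)"] r \<open>d > 0\<close> by auto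
    have r2k: "r ^ (2 * k) \<le> r ^ k" using r by (intro power_decreasing) auto
    have "(\<lambda>z. 1 * hk (2 * k) z + (-1) * hk k z) \<in> span_hk"
      using k by (intro span_hk_add span_hk_hk) auto
    then have "span_hk_dist_le r (\<lambda>z. hk (2 * k) z - hk k z) 0"
      by (simp add: span_hk_dist_le_0_of_span)
    \<comment> \<open>\<open>h\<^sub>2\<^sub>k - h\<^sub>k\<close> is \<open>-ln 2 / (1 - z)\<close> up to two small logarithms\<close>
    then have "span_hk_dist_le r (\<lambda>z. - of_real (ln 2) * (1 / (1 - z))) (0 + 4 * r ^ k / (1 - r))"
    proof (rule span_hk_dist_le_perturb)
      fix z :: complex assume "z \<in> cball 0 r"
      then have z: "norm z \<le> r" by simp
      have "ln (real (2 * k)) = ln 2 + ln (real k)" using k by (simp add: ln_mult)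
      then have "hk (2 * k) z - hk k z - - of_real (ln 2) * (1 / (1 - z))
                   = ln_term (2 * k) z - ln_term k z"
        by (simp add: hk_eq_ln_term algebra_simps)
      also have "norm \<dots> \<le> 2 * r ^ (2 * k) / (1 - r) + 2 * r ^ k / (1 - r)"
        using norm_ln_term_le[OF z r(2)] k r2k norm_triangle_ineq4 by (smt (verit))
      also have "\<dots> \<le> 4 * r ^ k / (1 - r)"
        using divide_right_mono[of "2 * r ^ (2 * k) + 2 * r ^ k" "4 * r ^ k" "1 - r"] r2k r
        by (simp add: add_divide_distrib)
      finally show "norm (hk (2 * k) z - hk k z - - of_real (ln 2) * (1 / (1 - z)))
                      \<le> 4 * r ^ k / (1 - r)" .
    qed
    moreover have "4 * r ^ k / (1 - r) \<le> d" using k r by (simp add: field_simps)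
    ultimately show "span_hk_dist_le r (\<lambda>z. - of_real (ln 2) * (1 / (1 - z))) (0 + d)"
      by (auto elim: span_hk_dist_le_mono)
  qed
  from span_hk_dist_le_scale[OF this, of "- 1 / of_real (ln 2)"]
  show ?thesis by simp
qed

lemma span_hk_dist_le_ln_term_diff:
  assumes r: "0 < r" "r < 1" and k: "k \<ge> 1"
  shows "span_hk_dist_le r (\<lambda>z. ln_term k z - ln_term 1 z) 0"
proof (cases "k = 1")
  case True
  then show ?thesis by (simp add: span_hk_dist_le_bound)
next
  case False
  have "span_hk_dist_le r (\<lambda>z. hk k z + of_real (ln (real k)) * (1 / (1 - z)))
          (0 + norm (of_real (ln (real k)) :: complex) * 0)"
    using False k span_hk_hk[of k 1]
    by (intro span_hk_dist_le_add span_hk_dist_le_scale span_hk_dist_le_inverse_one_minus r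
          span_hk_dist_le_0_of_span) auto
  then show ?thesis by (simp add: hk_eq_ln_term)
qed

lemma span_hk_dist_le_ln_term:
  assumes r: "0 < r" "r < 1" and k: "k \<ge> 1"
  shows "span_hk_dist_le r (ln_term k) 0"
proof (rule span_hk_dist_le_eps)
  fix d :: real assume "d > 0"
  obtain m where m: "m \<ge> 1" "r ^ m < min (1/2) (d * (1 - r) / 2)"
    using ex_power_less_beyond[of r "min (1/2) (d * (1 - r) / 2)"] r \<open>d > 0\<close> by auto
  have "span_hk_dist_le r
          (\<lambda>z. (ln_term k z - ln_term 1 z) + (-1) * (ln_term m z - ln_term 1 z))
          0"
    using span_hk_dist_le_add[OF span_hk_dist_le_ln_term_diff[OF r k]
            span_hk_dist_le_scale[OF span_hk_dist_le_ln_term_diff[OF r m(1)], of "-1"]]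
    by simp
  then have "span_hk_dist_le r (ln_term k) (0 + 2 * r ^ m / (1 - r))"
  proof (rule span_hk_dist_le_perturb)
    fix z :: complex assume "z \<in> cball 0 r"
    then show "norm ((ln_term k z - ln_term 1 z) + (-1) * (ln_term m z - ln_term 1 z) - ln_term k z)
                 \<le> 2 * r ^ m / (1 - r)"
      using norm_ln_term_le[of z r m] r m by simp
  qed
  moreover have "2 * r ^ m / (1 - r) \<le> d" using m r by (simp add: field_simps)
  ultimately show "span_hk_dist_le r (ln_term k) (0 + d)"
    by (auto elim: span_hk_dist_le_mono)
qed

lemma norm_power_term_expansion_le:
  assumes z: "norm z \<le> r" and r: "r < 1" and "j \<ge> 1" "N \<ge> 1"
  shows "norm (power_term j z + ln_term j z + (\<Sum>n=2..N. power_term (j * n) z / of_nat n))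
           \<le> r ^ Suc N / (1 - r)\<^sup>2"
proof -
  define w where "w = z ^ j"
  have "norm w \<le> norm z"
    using power_decreasing[of 1 j "norm z"] \<open>j \<ge> 1\<close> z r unfolding w_def norm_power by simp
  with z have wr: "norm w \<le> r" by simp
  then have "0 \<le> r" using norm_ge_zero order_trans by blast
  have "(\<Sum>k=1..N. w ^ k / of_nat k) = w + (\<Sum>n=2..N. w ^ n / of_nat n)"
    using \<open>N \<ge> 1\<close> by (subst sum.atLeast_Suc_atMost) (auto simp: numeral_2_eq_2)
  then have "power_term j z + ln_term j z + (\<Sum>n=2..N. power_term (j * n) z / of_nat n)
               = (Ln (1 - w) + (\<Sum>k=1..N. w ^ k / of_nat k)) / (1 - z)"
    unfolding power_term_def ln_term_def power_mult w_def[symmetric]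
    by (simp add: add_divide_distrib sum_divide_distrib mult.commute)
  also have "norm \<dots> \<le> (norm w ^ Suc N / (1 - norm w)) / (1 - r)"
    using norm_divide_one_minus_le[OF z r] norm_Ln_one_minus_plus_partial_sum_le[of w N] wr r
    by (smt (verit) divide_right_mono)
  also have "\<dots> \<le> (r ^ Suc N / (1 - r)) / (1 - r)"
    using wr r \<open>0 \<le> r\<close> by (intro divide_right_mono frac_le power_mono) auto
  finally show ?thesis by (simp add: power2_eq_square)
qed

lemma span_hk_dist_le_power_term_step:
  assumes r: "0 < r" "r < 1" and "j \<ge> 1" "N \<ge> 1"
    and dist_multiples: "\<And>n. n \<ge> 2 \<Longrightarrow> span_hk_dist_le r (power_term (j * n)) (B n)"
  shows "span_hk_dist_le r (power_term j) ((\<Sum>n=2..N. B n / real n) + r ^ Suc N / (1 - r)\<^sup>2)"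
proof -
  define H where "H z = (-1) * ln_term j z + (\<Sum>n=2..N. (- (1 / of_nat n)) * power_term (j * n) z)"
    for z
  have "span_hk_dist_le r H (norm (-1 :: complex) * 0 +
          (\<Sum>n=2..N. norm (- (1 / of_nat n) :: complex) * B n))"
    unfolding H_def using \<open>j \<ge> 1\<close>
    by (intro span_hk_dist_le_add span_hk_dist_le_scale span_hk_dist_le_sum
          span_hk_dist_le_ln_term r dist_multiples) auto
  then have "span_hk_dist_le r H (\<Sum>n=2..N. B n / real n)"
    by (simp add: norm_divide)
  then show ?thesis
  proof (rule span_hk_dist_le_perturb)
    fix z :: complex assume "z \<in> cball 0 r"
    have "H z - power_term j z
            = - (power_term j z + ln_term j z + (\<Sum>n=2..N. power_term (j * n) z / of_nat n))"
      unfolding H_def by (simp add: sum_negf)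
    then have "norm (H z - power_term j z)
                 = norm (power_term j z + ln_term j z + (\<Sum>n=2..N. power_term (j * n) z / of_nat n))"
      by (simp only: norm_minus_cancel)
    also have "\<dots> \<le> r ^ Suc N / (1 - r)\<^sup>2"
      using \<open>z \<in> cball 0 r\<close> assms by (intro norm_power_term_expansion_le) auto
    finally show "norm (H z - power_term j z) \<le> r ^ Suc N / (1 - r)\<^sup>2" .
  qed
qed

lemma sum_iterated_power_bound_le:
  fixes r :: real
  assumes r: "0 \<le> r" "r < 1" and "j \<ge> 1"
  defines "M \<equiv> 1 / (1 - r)"
  shows "(\<Sum>n=2..N. M ^ (t + 1) * (r ^ (j * n)) ^ (2 ^ t) / real n) \<le> M ^ (t + 2) * (r ^ j) ^ (2 ^ Suc t)"
proof -
  define q where "q = (r ^ j) ^ (2 ^ t)"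
  have M: "M > 0" using r by (simp add: M_def)
  have "r ^ j \<le> r" using \<open>j \<ge> 1\<close> r power_decreasing[of 1 j r] by simp
  moreover have "q \<le> r ^ j"
    unfolding q_def using r power_decreasing[of 1 "2 ^ t" "r ^ j"] by (simp add: power_le_one)
  ultimately have q: "0 \<le> q" "q \<le> r" using r by (auto simp: q_def)
  have "(\<Sum>n=2..N. M ^ (t + 1) * (r ^ (j * n)) ^ (2 ^ t) / real n)
          = M ^ (t + 1) * (\<Sum>n=2..N. q ^ n / real n)"
    unfolding q_def sum_distrib_left
    by (intro sum.cong) (simp_all add: power_mult[symmetric] mult_ac)
  also have "\<dots> \<le> M ^ (t + 1) * (q\<^sup>2 / (1 - q))"
    using sum_power_div_of_nat_le[of q N] q r M by (intro mult_left_mono) auto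
  also have "\<dots> \<le> M ^ (t + 1) * (q\<^sup>2 * M)"
  proof -
    have "1 / (1 - q) \<le> M" unfolding M_def using q r by (intro divide_left_mono) auto
    then show ?thesis
      using q r M mult_left_mono[of "1 / (1 - q)" M "q\<^sup>2"]
      by (intro mult_left_mono) (auto simp: divide_inverse)
  qed
  also have "\<dots> = M ^ (t + 2) * (r ^ j) ^ (2 ^ Suc t)"
    unfolding q_def by (simp add: power_mult[symmetric] mult_ac)
  finally show ?thesis .
qed

lemma span_hk_dist_le_power_term_iterate:
  assumes r: "0 < r" "r < 1"
  shows "j \<ge> 1 \<Longrightarrow> span_hk_dist_le r (power_term j) ((1 / (1 - r)) ^ (t + 1) * (r ^ j) ^ (2 ^ t))"
proof (induction t arbitrary: j)
  case 0
  show ?case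
  proof (rule span_hk_dist_le_bound)
    fix z :: complex assume "z \<in> cball 0 r"
    then have z: "norm z \<le> r" by simp
    have "norm (power_term j z) \<le> norm (z ^ j) / (1 - r)"
      unfolding power_term_def using z r(2) by (rule norm_divide_one_minus_le)
    also have "\<dots> \<le> r ^ j / (1 - r)"
      using z r by (intro divide_right_mono) (auto simp: norm_power power_mono)
    finally show "norm (power_term j z) \<le> (1 / (1 - r)) ^ (0 + 1) * (r ^ j) ^ (2 ^ 0)" by simp
  qed
next
  case (Suc t)
  show ?case
  proof (rule span_hk_dist_le_eps)
    fix d :: real assume "d > 0"
    obtain N where N: "N \<ge> 1" "r ^ N < d * (1 - r)\<^sup>2"
      using ex_power_less_beyond[of r "d * (1 - r)\<^sup>2"] r \<open>d > 0\<close> by auto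
    have "span_hk_dist_le r (power_term j)
            ((\<Sum>n=2..N. (1 / (1 - r)) ^ (t + 1) * (r ^ (j * n)) ^ (2 ^ t) / real n)
             + r ^ Suc N / (1 - r)\<^sup>2)"
      using Suc r N by (intro span_hk_dist_le_power_term_step) auto
    moreover have "(\<Sum>n=2..N. (1 / (1 - r)) ^ (t + 1) * (r ^ (j * n)) ^ (2 ^ t) / real n)
                     \<le> (1 / (1 - r)) ^ (Suc t + 1) * (r ^ j) ^ 2 ^ Suc t"
      using sum_iterated_power_bound_le[where N = N and t = t] r Suc.prems by simp
    moreover have "r ^ Suc N / (1 - r)\<^sup>2 \<le> d"
    proof -
      have "r ^ Suc N \<le> r ^ N" using r by (intro power_decreasing) auto
      also have "\<dots> \<le> d * (1 - r)\<^sup>2" using N(2) by simp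
      finally show ?thesis using r by (simp add: pos_divide_le_eq)
    qed
    ultimately show "span_hk_dist_le r (power_term j) ((1 / (1 - r)) ^ (Suc t + 1) * (r ^ j) ^ 2 ^ Suc t + d)"
      by (elim span_hk_dist_le_mono add_mono)
  qed
qed

lemma span_hk_dist_le_power_term:
  assumes r: "0 < r" "r < 1"
  shows "span_hk_dist_le r (power_term j) 0"
proof (cases "j = 0")
  case True
  then have "power_term j = (\<lambda>z. 1 / (1 - z))" by (simp add: power_term_def fun_eq_iff)
  then show ?thesis using span_hk_dist_le_inverse_one_minus[OF r] by simp
next
  case False
  show ?thesis
  proof (rule span_hk_dist_le_eps)
    fix d :: real assume "d > 0"
    have "(\<lambda>t. (1 / (1 - r)) ^ (t + 1) * r ^ (2 ^ t)) \<longlonglongrightarrow> 0"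
      using r by (intro power_times_power_two_power_tendsto_0) auto
    from order_tendstoD(2)[OF this \<open>d > 0\<close>]
    obtain t where t: "(1 / (1 - r)) ^ (t + 1) * r ^ (2 ^ t) < d"
      unfolding eventually_sequentially by blast
    have "r ^ j \<le> r" using False r power_decreasing[of 1 j r] by simp
    then have "(1 / (1 - r)) ^ (t + 1) * (r ^ j) ^ (2 ^ t) \<le> (1 / (1 - r)) ^ (t + 1) * r ^ (2 ^ t)"
      using r by (intro mult_left_mono power_mono) auto
    then show "span_hk_dist_le r (power_term j) (0 + d)"
      using span_hk_dist_le_power_term_iterate[OF r, of j t] False t
      by (auto elim: span_hk_dist_le_mono)
  qed
qed

lemma span_hk_dist_le_holomorphic:
  assumes hol: "f holomorphic_on ball 0 1" and r: "0 < r" "r < 1"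
  shows "span_hk_dist_le r f 0"
proof (rule span_hk_dist_le_eps)
  fix d :: real assume "d > 0"
  define \<phi> where "\<phi> z = (1 - z) * f z" for z
  define a where "a n = (deriv ^^ n) \<phi> 0 / fact n" for n
  have "\<phi> holomorphic_on ball 0 1" unfolding \<phi>_def by (intro holomorphic_intros hol)
  then have sums: "(\<lambda>n. a n * z ^ n) sums \<phi> z" if "z \<in> ball 0 1" for z
    using holomorphic_power_series[of \<phi> 0 1 z] that by (simp add: a_def)
  define \<rho> where "\<rho> = (1 + r) / 2"
  have \<rho>: "r < \<rho>" "\<rho> < 1" using r by (auto simp: \<rho>_def)
  then have "summable (\<lambda>n. a n * of_real \<rho> ^ n)"
    using sums[of "of_real \<rho>"] r by (auto simp: sums_iff)
  then have "ereal \<rho> \<le> conv_radius a"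
    using conv_radius_geI[of a "of_real \<rho>"] \<rho> r by simp
  moreover have "ereal r < ereal \<rho>" using \<rho> by simp
  ultimately have "ereal r < conv_radius a" by (rule less_le_trans[rotated])
  from powser_uniform_limit[OF this, of 0, unfolded uniform_limit_sequentially_iff diff_zero]
  have "\<exists>N. \<forall>z\<in>cball 0 r. dist (\<Sum>i<N. a i * z ^ i) (\<Sum>i. a i * z ^ i) < d * (1 - r)"
    using \<open>d > 0\<close> r by (meson diff_gt_0_iff_gt mult_pos_pos order_refl)
  then obtain N where N: "\<And>z. z \<in> cball 0 r \<Longrightarrow> dist (\<Sum>i<N. a i * z ^ i) (\<Sum>i. a i * z ^ i) < d * (1 - r)"
    by blast
  have "span_hk_dist_le r (\<lambda>z. \<Sum>i<N. a i * power_term i z) (\<Sum>i<N. norm (a i) * 0)"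
    by (intro span_hk_dist_le_sum span_hk_dist_le_scale span_hk_dist_le_power_term r) simp
  then have "span_hk_dist_le r (\<lambda>z. \<Sum>i<N. a i * power_term i z) 0" by simp
  then show "span_hk_dist_le r f (0 + d)"
  proof (rule span_hk_dist_le_perturb)
    fix z :: complex assume z: "z \<in> cball 0 r"
    \<comment> \<open>\<open>f = \<phi> / (1 - z)\<close>, so truncating the power series of \<open>\<phi>\<close> approximates \<open>f\<close> by the \<open>power_term i\<close>\<close>
    have "1 - z \<noteq> 0" using z r by auto
    then have "(\<Sum>i<N. a i * power_term i z) - f z = ((\<Sum>i<N. a i * z ^ i) - \<phi> z) / (1 - z)"
      by (simp add: power_term_def \<phi>_def sum_divide_distrib diff_divide_distrib)
    also have "norm \<dots> \<le> norm ((\<Sum>i<N. a i * z ^ i) - \<phi> z) / (1 - r)"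
      using z r by (intro norm_divide_one_minus_le) auto
    also have "\<dots> \<le> d"
      using N[OF z] sums[of z] z r by (simp add: sums_iff dist_norm divide_le_eq)
    finally show "norm ((\<Sum>i<N. a i * power_term i z) - f z) \<le> d" .
  qed
qed

theorem mainTheorem10:
  fixes f :: "complex \<Rightarrow> complex"
  assumes "f \<in> hardy2"
  shows "\<exists>p :: nat \<Rightarrow> complex \<Rightarrow> complex. (\<forall>j. p j \<in> span_hk) \<and>
           (\<forall>K. compact K \<and> K \<subseteq> ball 0 1 \<longrightarrow> uniform_limit K p f sequentially)"
proof (rule uniform_limit_on_compacts_of_approx_on_cballs)
  fix r \<epsilon> :: real assume "0 < r" "r < 1" "\<epsilon> > 0"
  have "f holomorphic_on ball 0 1" using assms by (simp add: hardy2_def)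
  then have "span_hk_dist_le r f 0"
    using \<open>0 < r\<close> \<open>r < 1\<close> by (rule span_hk_dist_le_holomorphic)
  from span_hk_dist_leD[OF this \<open>\<epsilon> > 0\<close>]
  show "\<exists>p\<in>span_hk. \<forall>z\<in>cball 0 r. dist (p z) (f z) \<le> \<epsilon>" by (simp add: dist_norm)
qed

end
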